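(* Let $G=(V,E)$ be a control flow graph, let $p$ be a predicate node with successors $s_1,s_2$ in $G$ and with at least two successors in $A_p$, and let $i\in\{1,2\}$. Let $a,b\in V_p\setminus\{p\}$ be two distinct nodes. Then every maximal path from $s_i$ in $G$ contains $a$ before any occurrence of $b$ if and only if there is an $s_i$-strip containing both $a$ and $b$ in which $a$ occurs before $b$.
   Context: A control flow graph (CFG) is a finite directed graph $G=(V,E)$ in which every node has at most two outgoing edges; nodes with exactly two outgoing edges are predicate nodes. A path from $n_1$ is a nonempty finite or infinite sequence of nodes with each adjacent pair an edge; it is maximal if it is infinite or its last node has no successor. $V_p$ is the set of nodes occurring on all maximal paths from $p$ in $G$. For $V'\subseteq V$, a $V'$-interval from $x$ to $y$ is a finite path $n_1\ldots n_k$ in $G$ with $k\ge 2$, $n_1=x\in V'$, $n_k=y\in V'$, and $n_i\notin V'$ for $1<i<k$. $A_p$ is the directed graph with node set $V_p$ and an edge $(x,y)$ iff there is a $V_p$-interval from $x$ to $y$ in $G$. For $i\in\{1,2\}$, $V_i$ is the set of nodes $n\in V_p$ such that there is a finite path in $G$ from $s_i$ to $n$ whose nodes other than the last one all lie outside $V_p$ (possibly $n=s_i$). An $s_i$-strip is a finite path $n\ldots m$ in $A_p$ whose first node lies in $V_i$ and all of whose other nodes lie in $V_p\setminus V_i$ (i.e., it belongs to $V_i.(V_p\setminus V_i)^*$), such that the successor of $m$ in $A_p$ is a node in $V_i$. *)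

theory Defs
  imports Main
begin

definition cfg :: "'v set \<Rightarrow> ('v \<times> 'v) set \<Rightarrow> bool" where
  "cfg V E \<longleftrightarrow> finite V \<and> E \<subseteq> V \<times> V \<and> (\<forall>x. card {y. (x, y) \<in> E} \<le> 2)"

definition succs :: "('v \<times> 'v) set \<Rightarrow> 'v \<Rightarrow> 'v set" where
  "succs E x = {y. (x, y) \<in> E}"

definition fpath :: "('v \<times> 'v) set \<Rightarrow> 'v list \<Rightarrow> bool" where
  "fpath E xs \<longleftrightarrow> xs \<noteq> [] \<and> (\<forall>j. Suc j < length xs \<longrightarrow> (xs ! j, xs ! Suc j) \<in> E)"

definition ipath :: "('v \<times> 'v) set \<Rightarrow> (nat \<Rightarrow> 'v) \<Rightarrow> bool" where
  "ipath E f \<longleftrightarrow> (\<forall>j. (f j, f (Suc j)) \<in> E)"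

definition fmaxpath :: "('v \<times> 'v) set \<Rightarrow> 'v \<Rightarrow> 'v list \<Rightarrow> bool" where
  "fmaxpath E n xs \<longleftrightarrow> fpath E xs \<and> hd xs = n \<and> succs E (last xs) = {}"

definition imaxpath :: "('v \<times> 'v) set \<Rightarrow> 'v \<Rightarrow> (nat \<Rightarrow> 'v) \<Rightarrow> bool" where
  "imaxpath E n f \<longleftrightarrow> ipath E f \<and> f 0 = n"

definition Vp :: "'v set \<Rightarrow> ('v \<times> 'v) set \<Rightarrow> 'v \<Rightarrow> 'v set" where
  "Vp V E p = {v \<in> V. (\<forall>xs. fmaxpath E p xs \<longrightarrow> v \<in> set xs)
                      \<and> (\<forall>f. imaxpath E p f \<longrightarrow> v \<in> range f)}"

definition interval :: "('v \<times> 'v) set \<Rightarrow> 'v set \<Rightarrow> 'v \<Rightarrow> 'v \<Rightarrow> 'v list \<Rightarrow> bool" where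
  "interval E W x y xs \<longleftrightarrow> fpath E xs \<and> length xs \<ge> 2 \<and> hd xs = x \<and> last xs = y
     \<and> x \<in> W \<and> y \<in> W \<and> (\<forall>j. 0 < j \<and> j < length xs - 1 \<longrightarrow> xs ! j \<notin> W)"

text \<open>Edge set of the graph A_p (its node set is V_p).\<close>
definition Ap :: "'v set \<Rightarrow> ('v \<times> 'v) set \<Rightarrow> 'v \<Rightarrow> ('v \<times> 'v) set" where
  "Ap V E p = {(x, y). x \<in> Vp V E p \<and> y \<in> Vp V E p \<and> (\<exists>xs. interval E (Vp V E p) x y xs)}"

text \<open>V_i for the successor s = s_i: nodes of V_p reachable from s by a finite path whose
  nodes other than the last lie outside V_p.\<close>
definition Vsucc :: "'v set \<Rightarrow> ('v \<times> 'v) set \<Rightarrow> 'v \<Rightarrow> 'v \<Rightarrow> 'v set" where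
  "Vsucc V E p s = {n \<in> Vp V E p. \<exists>xs. fpath E xs \<and> hd xs = s \<and> last xs = n
        \<and> (\<forall>j. j < length xs - 1 \<longrightarrow> xs ! j \<notin> Vp V E p)}"

definition strip :: "'v set \<Rightarrow> ('v \<times> 'v) set \<Rightarrow> 'v \<Rightarrow> 'v \<Rightarrow> 'v list \<Rightarrow> bool" where
  "strip V E p s xs \<longleftrightarrow> fpath (Ap V E p) xs
     \<and> hd xs \<in> Vsucc V E p s
     \<and> (\<forall>j. 0 < j \<and> j < length xs \<longrightarrow> xs ! j \<in> Vp V E p - Vsucc V E p s)
     \<and> succs (Ap V E p) (last xs) \<noteq> {}
     \<and> succs (Ap V E p) (last xs) \<subseteq> Vsucc V E p s"

definition all_before :: "('v \<times> 'v) set \<Rightarrow> 'v \<Rightarrow> 'v \<Rightarrow> 'v \<Rightarrow> bool" where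
  "all_before E s a b \<longleftrightarrow>
     (\<forall>xs. fmaxpath E s xs \<longrightarrow> (\<exists>j < length xs. xs ! j = a \<and> (\<forall>k \<le> j. xs ! k \<noteq> b)))
   \<and> (\<forall>f. imaxpath E s f \<longrightarrow> (\<exists>j. f j = a \<and> (\<forall>k \<le> j. f k \<noteq> b)))"

end

(*
  Write C for V_p - {p} and let u, v be two distinct A_p-successors of p. A closed walk through p,
  repeated forever, is a maximal path from p, so it visits every node of V_p; in particular it
  visits u and v, and entering it from p through the interval to the one of u, v visited last
  gives a closed walk through p missing the other. Hence no nontrivial walk returns to p. Similar
  cycle arguments show that every maximal path from a node of C visits every other node of C, that
  every node x of C has exactly one A_p-successor ap_next x, and that ap_next is injective on C.
  So C is a single ap_next-cycle, and the nodes of V_p on any walk between nodes of C follow it.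

  Every walk from s_i enters V_p at a node of V_i. Hence "every maximal path from s_i meets a
  before b" says that no walk from s_i to b avoids a, that is, every ap_next-orbit segment from a
  node of V_i to b passes through a. The s_i-strips are the orbit segments from a node of V_i up
  to its first return to V_i, so this holds iff the last visit to V_i before b starts a strip
  containing a before b.
*)
theory Submission
  imports Defs "HOL-Library.Omega_Words_Fun"
begin

section \<open>Orbits and first returns\<close>

definition first_return :: "('a \<Rightarrow> 'a) \<Rightarrow> 'a set \<Rightarrow> 'a \<Rightarrow> nat \<Rightarrow> bool" where
  "first_return f S x m \<longleftrightarrow>
     x \<in> S \<and> 0 < m \<and> (f ^^ m) x \<in> S \<and> (\<forall>k. 0 < k \<longrightarrow> k < m \<longrightarrow> (f ^^ k) x \<notin> S)"

lemma funpow_in: "f ` A \<subseteq> A \<Longrightarrow> x \<in> A \<Longrightarrow> (f ^^ n) x \<in> A"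
  by (induction n) auto

lemma inj_on_funpow: "inj_on f A \<Longrightarrow> f ` A \<subseteq> A \<Longrightarrow> inj_on (f ^^ n) A"
proof (induction n)
  case (Suc n)
  have "inj_on f ((f ^^ n) ` A)"
    using Suc.prems funpow_in[of f A] by (blast intro: inj_on_subset)
  then show ?case
    unfolding funpow.simps(2) using Suc by (blast intro: comp_inj_on)
qed simp

lemma funpow_funpow: "(f ^^ m) ((f ^^ n) x) = (f ^^ (m + n)) x"
  by (simp add: funpow_add)

lemma first_return_segment_unavoidable:
  assumes "inj_on f A" "f ` A \<subseteq> A" "S \<subseteq> A"
    and "first_return f S x m" "j < k" "k < m" "y \<in> S" "(f ^^ n) y = (f ^^ k) x"
  shows "\<exists>i\<le>n. (f ^^ i) y = (f ^^ j) x"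
proof (cases "k \<le> n")
  case True
  have "(f ^^ k) ((f ^^ (n - k)) y) = (f ^^ k) x"
    using assms(8) True by (simp add: funpow_funpow)
  then have "(f ^^ (n - k)) y = x"
    using inj_on_funpow[OF assms(1,2)] funpow_in[OF assms(2)] assms(3,4,7)
    unfolding first_return_def inj_on_def by blast
  then have "(f ^^ (n - k + j)) y = (f ^^ j) x"
    by (metis funpow_funpow add.commute)
  then show ?thesis
    using True assms(5) by (intro exI[of _ "n - k + j"]) auto
next
  case False
  have "(f ^^ n) ((f ^^ (k - n)) x) = (f ^^ n) y"
    using assms(8) False by (simp add: funpow_funpow)
  then have "(f ^^ (k - n)) x = y"
    using inj_on_funpow[OF assms(1,2)] funpow_in[OF assms(2)] assms(3,4,7)
    unfolding first_return_def inj_on_def by blast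
  then show ?thesis
    using assms(4,6,7) False unfolding first_return_def by auto
qed

lemma unavoidable_first_return_segment:
  assumes periodic: "\<And>x. x \<in> S \<Longrightarrow> \<exists>N>0. (f ^^ N) x = x"
    and "y \<in> S" "(f ^^ n) y = b" "a \<noteq> b"
    and unavoidable: "\<And>x n. x \<in> S \<Longrightarrow> (f ^^ n) x = b \<Longrightarrow> \<exists>i\<le>n. (f ^^ i) x = a"
  shows "\<exists>x m j k. first_return f S x m \<and> j < k \<and> k < m \<and> (f ^^ j) x = a \<and> (f ^^ k) x = b"
proof -
  \<comment> \<open>The segment starts at the last visit \<open>x\<close> of the orbit of \<open>y\<close> to \<open>S\<close> before it
    reaches \<open>b\<close>; \<open>m\<close> is the first return of \<open>x\<close> to \<open>S\<close> after that.\<close>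
  define q where "q = (GREATEST q. q \<le> n \<and> (f ^^ q) y \<in> S)"
  have q: "q \<le> n" "(f ^^ q) y \<in> S"
    using GreatestI_nat[where P = "\<lambda>q. q \<le> n \<and> (f ^^ q) y \<in> S" and k = 0 and b = n] assms(2)
    unfolding q_def by auto
  have q_max: "(f ^^ i) y \<notin> S" if "q < i" "i \<le> n" for i
    using Greatest_le_nat[where P = "\<lambda>q. q \<le> n \<and> (f ^^ q) y \<in> S" and k = i and b = n] that
    unfolding q_def by auto
  define x where "x = (f ^^ q) y"
  have x_b: "(f ^^ (n - q)) x = b"
    using assms(3) q(1) by (simp add: x_def funpow_funpow)
  then obtain j where j: "j \<le> n - q" "(f ^^ j) x = a"
    using unavoidable q(2) x_def by blast
  have "j < n - q"
    using j x_b assms(4) le_neq_implies_less by blast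
  obtain N where N: "0 < N" "(f ^^ N) x = x"
    using periodic q(2) x_def by blast
  have "(f ^^ (Suc (n - q) * N)) x = x"
    using funpow_mod_eq[OF N(2), of "Suc (n - q) * N"] by simp
  moreover have "n - q < Suc (n - q) * N"
    using N(1) mult_le_mono2[of 1 N "Suc (n - q)"] by simp
  ultimately have ex: "\<exists>m. n - q < m \<and> (f ^^ m) x \<in> S"
    using q(2) x_def by metis
  define m where "m = (LEAST m. n - q < m \<and> (f ^^ m) x \<in> S)"
  have m: "n - q < m" "(f ^^ m) x \<in> S"
    using LeastI_ex[OF ex] unfolding m_def by auto
  have "(f ^^ k) x \<notin> S" if "0 < k" "k < m" for k
  proof (cases "k \<le> n - q")
    case True
    then show ?thesis
      using q_max[of "q + k"] that q(1) by (simp add: x_def funpow_funpow add.commute)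
  next
    case False
    then show ?thesis
      using not_less_Least[of k "\<lambda>m. n - q < m \<and> (f ^^ m) x \<in> S"] that unfolding m_def by auto
  qed
  then have "first_return f S x m"
    unfolding first_return_def using q(2) m x_def by auto
  then show ?thesis
    using \<open>j < n - q\<close> j(2) x_b m(1) by blast
qed

lemma unavoidable_iff_first_return_segment:
  assumes "inj_on f A" "f ` A \<subseteq> A" "S \<subseteq> A" "\<And>x. x \<in> S \<Longrightarrow> \<exists>N>0. (f ^^ N) x = x"
    and "y \<in> S" "(f ^^ n) y = b" "a \<noteq> b"
  shows "(\<forall>x\<in>S. \<forall>n. (f ^^ n) x = b \<longrightarrow> (\<exists>i\<le>n. (f ^^ i) x = a)) \<longleftrightarrow>
    (\<exists>x m j k. first_return f S x m \<and> j < k \<and> k < m \<and> (f ^^ j) x = a \<and> (f ^^ k) x = b)"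
proof
  assume "\<forall>x\<in>S. \<forall>n. (f ^^ n) x = b \<longrightarrow> (\<exists>i\<le>n. (f ^^ i) x = a)"
  then show "\<exists>x m j k. first_return f S x m \<and> j < k \<and> k < m \<and> (f ^^ j) x = a \<and> (f ^^ k) x = b"
    using unavoidable_first_return_segment[OF assms(4-7)] by blast
next
  assume "\<exists>x m j k. first_return f S x m \<and> j < k \<and> k < m \<and> (f ^^ j) x = a \<and> (f ^^ k) x = b"
  then show "\<forall>x\<in>S. \<forall>n. (f ^^ n) x = b \<longrightarrow> (\<exists>i\<le>n. (f ^^ i) x = a)"
    using first_return_segment_unavoidable[OF assms(1-3)] by metis
qed

section \<open>Walks and maximal paths\<close>

lemma fpath_iff_successively: "fpath E xs \<longleftrightarrow> xs \<noteq> [] \<and> successively (\<lambda>x y. (x, y) \<in> E) xs"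
  by (simp add: fpath_def successively_conv_nth)

lemma fpath_singleton [simp]: "fpath E [x]"
  by (simp add: fpath_def)

lemma fpath_Cons_Cons [simp]: "fpath E (x # y # xs) \<longleftrightarrow> (x, y) \<in> E \<and> fpath E (y # xs)"
  by (simp add: fpath_iff_successively)

lemma fpath_append_Cons: "fpath E (xs @ y # ys) \<longleftrightarrow> fpath E (xs @ [y]) \<and> fpath E (y # ys)"
  by (auto simp: fpath_iff_successively successively_append_iff)

definition walk :: "('v \<times> 'v) set \<Rightarrow> 'v \<Rightarrow> 'v list \<Rightarrow> 'v \<Rightarrow> bool" where
  "walk E x xs y \<longleftrightarrow> fpath E xs \<and> hd xs = x \<and> last xs = y"

lemma walk_singleton [simp]: "walk E x [x] x"
  by (simp add: walk_def)

lemma walk_ConsE: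
  assumes "walk E x xs y"
  obtains ys where "xs = x # ys"
  using assms by (cases xs) (auto simp: walk_def fpath_def)

lemma walk_snocE:
  assumes "walk E x xs y"
  obtains ys where "xs = ys @ [y]"
  using assms by (cases xs rule: rev_cases) (auto simp: walk_def fpath_def)

lemma walk_split:
  "walk E x (xs @ y # ys) z \<Longrightarrow> walk E x (xs @ [y]) y \<and> walk E y (y # ys) z"
  using fpath_append_Cons[of E xs y ys] by (auto simp: walk_def hd_append)

lemma walk_append:
  "walk E x (xs @ [y]) y \<Longrightarrow> walk E y (y # ys) z \<Longrightarrow> walk E x (xs @ y # ys) z"
  using fpath_append_Cons[of E xs y ys] by (auto simp: walk_def hd_append)

lemma fmaxpath_split:
  "fmaxpath E x (xs @ y # ys) \<Longrightarrow> walk E x (xs @ [y]) y \<and> fmaxpath E y (y # ys)"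
  using walk_split[of E x xs y ys] by (auto simp: fmaxpath_def walk_def)

lemma fmaxpath_prepend:
  assumes "walk E x (xs @ [y]) y" "fmaxpath E y ys"
  shows "fmaxpath E x (xs @ ys)"
proof -
  obtain zs where "ys = y # zs"
    using assms(2) by (cases ys) (auto simp: fmaxpath_def fpath_def)
  then show ?thesis
    using assms walk_append[of E x xs y zs "last ys"] by (auto simp: fmaxpath_def walk_def)
qed

lemma imaxpath_prefix:
  assumes "imaxpath E x g"
  shows "walk E x (prefix n g @ [g n]) (g n)"
proof -
  have "prefix n g @ [g n] = map g [0..<Suc n]"
    by (simp add: subsequence_def)
  moreover have "fpath E (map g [0..<Suc n])"
    using assms by (auto simp: imaxpath_def ipath_def fpath_def simp del: upt_Suc)
  ultimately show ?thesis
    using assms by (simp add: walk_def imaxpath_def hd_map last_map del: upt_Suc)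
qed

lemma nth_prefix_snoc: "k \<le> n \<Longrightarrow> (prefix n g @ [g n]) ! k = g k"
  by (cases "k < n") (auto simp: nth_append)

lemma imaxpath_suffix: "imaxpath E x g \<Longrightarrow> imaxpath E (g n) (suffix n g)"
  by (simp add: imaxpath_def ipath_def)

lemma imaxpath_prepend:
  assumes "walk E x (xs @ [y]) y" "imaxpath E y g"
  shows "imaxpath E x (xs \<frown> g)"
  unfolding imaxpath_def ipath_def
proof (intro conjI allI)
  have path: "fpath E (xs @ [g 0])" and g: "\<And>n. (g n, g (Suc n)) \<in> E"
    using assms by (auto simp: walk_def imaxpath_def ipath_def)
  have conc: "(xs \<frown> g) k = (xs @ [g 0]) ! k" if "k \<le> length xs" for k
    using that by (cases "k < length xs") (simp_all add: nth_append)
  fix n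
  show "((xs \<frown> g) n, (xs \<frown> g) (Suc n)) \<in> E"
  proof (cases "n < length xs")
    case True
    then show ?thesis
      using path conc[of n] conc[of "Suc n"] by (simp add: fpath_def)
  next
    case False
    then show ?thesis
      using g[of "n - length xs"] by (simp add: Suc_diff_le)
  qed
  show "(xs \<frown> g) 0 = x"
    using assms conc[of 0] by (simp add: walk_def imaxpath_def hd_conv_nth)
qed

lemma ipath_iter:
  assumes "fpath E (xs @ [hd xs])" "xs \<noteq> []"
  shows "ipath E (xs\<^sup>\<omega>)"
  unfolding ipath_def
proof
  fix n
  have edge: "(xs ! i, xs ! (Suc i mod length xs)) \<in> E" if "i < length xs" for i
  proof -
    have "((xs @ [hd xs]) ! i, (xs @ [hd xs]) ! Suc i) \<in> E"
      using assms(1) that unfolding fpath_def by simp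
    moreover have "(xs @ [hd xs]) ! Suc i = xs ! (Suc i mod length xs)"
    proof (cases "Suc i < length xs")
      case False
      then have "Suc i = length xs"
        using that by simp
      then show ?thesis
        using assms(2) by (simp add: hd_conv_nth)
    qed (simp add: nth_append)
    ultimately show ?thesis
      using that by (simp add: nth_append)
  qed
  have "Suc n mod length xs = Suc (n mod length xs) mod length xs"
    by (simp add: mod_Suc_eq)
  then show "(xs\<^sup>\<omega> n, xs\<^sup>\<omega> (Suc n)) \<in> E"
    using edge[of "n mod length xs"] assms(2) by simp
qed

section \<open>Maximal paths avoiding a set of nodes\<close>

definition escapes :: "('v \<times> 'v) set \<Rightarrow> 'v \<Rightarrow> 'v set \<Rightarrow> bool" where
  "escapes E x W \<longleftrightarrow>
     (\<exists>xs. fmaxpath E x xs \<and> set xs \<inter> W = {}) \<or> (\<exists>g. imaxpath E x g \<and> range g \<inter> W = {})"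

lemma escapes_mono: "escapes E x W \<Longrightarrow> W' \<subseteq> W \<Longrightarrow> escapes E x W'"
  unfolding escapes_def by blast

lemma maxpath_exists: "escapes E x {}"
proof -
  define g where "g n = ((\<lambda>y. SOME z. (y, z) \<in> E) ^^ n) x" for n
  have step: "(g n, g (Suc n)) \<in> E" if "succs E (g n) \<noteq> {}" for n
    using that someI_ex[of "\<lambda>z. (g n, z) \<in> E"] by (simp add: g_def succs_def)
  show ?thesis
  proof (cases "\<exists>n. succs E (g n) = {}")
    case True
    define n where "n = (LEAST n. succs E (g n) = {})"
    have last: "succs E (g n) = {}"
      unfolding n_def by (rule LeastI_ex[OF True])
    have "\<forall>k<n. succs E (g k) \<noteq> {}"
      unfolding n_def using not_less_Least by blast
    then have "fpath E (map g [0..<Suc n])"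
      using step by (auto simp: fpath_def simp del: upt_Suc)
    with last have "fmaxpath E x (map g [0..<Suc n])"
      by (simp add: fmaxpath_def hd_map last_map g_def del: upt_Suc)
    then show ?thesis
      unfolding escapes_def by blast
  next
    case False
    then have "ipath E g"
      using step by (simp add: ipath_def)
    then have "imaxpath E x g"
      by (simp add: imaxpath_def g_def)
    then show ?thesis
      unfolding escapes_def by blast
  qed
qed

lemma escapes_prepend:
  assumes "walk E x (xs @ [y]) y" "set xs \<inter> W = {}" "escapes E y W"
  shows "escapes E x W"
proof -
  have "\<exists>zs. fmaxpath E x zs \<and> set zs \<inter> W = {}" if "fmaxpath E y ys" "set ys \<inter> W = {}" for ys
    using that assms(1,2) fmaxpath_prepend[of E x xs y ys] by (intro exI[of _ "xs @ ys"]) auto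
  moreover have "\<exists>h. imaxpath E x h \<and> range h \<inter> W = {}" if "imaxpath E y g" "range g \<inter> W = {}" for g
    using that assms(1,2) imaxpath_prepend[of E x xs y g] by (intro exI[of _ "xs \<frown> g"]) auto
  ultimately show ?thesis
    using assms(3) unfolding escapes_def by blast
qed

lemma escapes_start: "escapes E x W \<Longrightarrow> x \<notin> W"
  unfolding escapes_def fmaxpath_def imaxpath_def fpath_def by (metis disjoint_iff hd_in_set rangeI)

lemma escapes_cycle:
  assumes "walk E x (x # xs) x" "xs \<noteq> []" "set xs \<inter> W = {}"
  shows "escapes E x W"
proof -
  obtain ys where xs: "xs = ys @ [x]"
    using assms(1,2) by (cases xs rule: rev_cases) (auto simp: walk_def)
  have "(x # ys)\<^sup>\<omega> n \<in> set (x # ys)" for n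
    using nth_mem[of "n mod length (x # ys)" "x # ys"] by simp
  moreover have "set (x # ys) \<inter> W = {}"
    using assms(3) xs by auto
  ultimately have "range ((x # ys)\<^sup>\<omega>) \<inter> W = {}"
    by blast
  moreover have "imaxpath E x ((x # ys)\<^sup>\<omega>)"
    using ipath_iter[of E "x # ys"] assms(1) xs by (simp add: imaxpath_def walk_def)
  ultimately show ?thesis
    unfolding escapes_def by (intro disjI2) blast
qed

lemma escapes_split:
  assumes "escapes E x A" "\<not> escapes E x B"
  shows "\<exists>w\<in>B. escapes E w A \<and> (\<exists>xs. walk E x (xs @ [w]) w \<and> set xs \<inter> B = {})"
proof -
  have fin: ?thesis if ys: "fmaxpath E x ys" "set ys \<inter> A = {}" for ys
  proof -
    have "\<exists>w\<in>set ys. w \<in> B"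
      using ys assms(2) unfolding escapes_def by blast
    then obtain xs w zs where split: "ys = xs @ w # zs" "w \<in> B" "\<forall>y\<in>set xs. y \<notin> B"
      by (rule split_list_first_propE)
    then have "walk E x (xs @ [w]) w" "fmaxpath E w (w # zs)"
      using ys(1) fmaxpath_split[of E x xs w zs] by simp_all
    moreover have "set (w # zs) \<inter> A = {}"
      using ys(2) split(1) by auto
    ultimately show ?thesis
      using split(2,3) unfolding escapes_def by blast
  qed
  have inf: ?thesis if g: "imaxpath E x g" "range g \<inter> A = {}" for g
  proof -
    have "\<exists>n. g n \<in> B"
      using g assms(2) unfolding escapes_def by blast
    define n where "n = (LEAST n. g n \<in> B)"
    have "g n \<in> B"
      unfolding n_def by (rule LeastI_ex) fact
    moreover have "set (prefix n g) \<inter> B = {}"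
      unfolding n_def using not_less_Least by fastforce
    moreover have "escapes E (g n) A"
      using imaxpath_suffix[OF g(1)] g(2) unfolding escapes_def suffix_def by blast
    ultimately show ?thesis
      using imaxpath_prefix[OF g(1), of n] by blast
  qed
  show ?thesis
    using assms(1) fin inf unfolding escapes_def by blast
qed

lemma unavoidable_reachable:
  assumes "\<not> escapes E x B"
  shows "\<exists>w\<in>B. \<exists>xs. walk E x (xs @ [w]) w \<and> set xs \<inter> B = {}"
  using escapes_split[OF maxpath_exists assms] by blast

definition reachable_avoiding :: "('v \<times> 'v) set \<Rightarrow> 'v \<Rightarrow> 'v \<Rightarrow> 'v \<Rightarrow> bool" where
  "reachable_avoiding E a x y \<longleftrightarrow> (\<exists>xs. walk E x xs y \<and> a \<notin> set xs)"

lemma not_reachable_avoiding_occurs_before: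
  assumes "fpath E xs" "hd xs = s" "a \<in> set xs" "\<not> reachable_avoiding E a s b" "a \<noteq> b"
  shows "\<exists>j<length xs. xs ! j = a \<and> (\<forall>k\<le>j. xs ! k \<noteq> b)"
proof -
  obtain ys zs where xs: "xs = ys @ a # zs" and "a \<notin> set ys"
    using split_list_first[OF assms(3)] by blast
  have "b \<notin> set ys"
  proof
    assume "b \<in> set ys"
    then obtain ys1 ys2 where "ys = ys1 @ b # ys2"
      using split_list by fast
    then have "walk E s (ys1 @ [b]) b"
      using assms(1,2) walk_split[of E s ys1 b "ys2 @ a # zs"] xs by (simp add: walk_def)
    moreover have "a \<notin> set (ys1 @ [b])"
      using \<open>a \<notin> set ys\<close> \<open>ys = ys1 @ b # ys2\<close> assms(5) by auto
    ultimately show False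
      using assms(4) unfolding reachable_avoiding_def by blast
  qed
  then have "xs ! k \<noteq> b" if "k \<le> length ys" for k
    using that assms(5) nth_mem[of k ys] by (cases "k = length ys") (auto simp: xs nth_append)
  then show ?thesis
    using xs by (intro exI[of _ "length ys"]) auto
qed

lemma all_before_not_reachable_avoiding:
  assumes before: "all_before E s a b"
  shows "\<not> reachable_avoiding E a s b"
proof
  assume "reachable_avoiding E a s b"
  then obtain xs' where walk': "walk E s xs' b" "a \<notin> set xs'"
    unfolding reachable_avoiding_def by blast
  obtain xs where "xs' = xs @ [b]"
    using walk'(1) by (rule walk_snocE)
  with walk' have walk: "walk E s (xs @ [b]) b" and "a \<notin> set xs"
    by auto
  have b_first: "\<exists>k\<le>j. \<rho> k = b" if "\<rho> j = a" "\<And>k. k < length xs \<Longrightarrow> \<rho> k = xs ! k"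
    "\<rho> (length xs) = b" for \<rho> :: "nat \<Rightarrow> _" and j
    using that \<open>a \<notin> set xs\<close> nth_mem[of j xs] by (cases "j < length xs") (auto simp: not_less)
  from maxpath_exists[of E b] show False
    unfolding escapes_def
  proof (elim disjE exE conjE)
    fix ys assume "fmaxpath E b ys"
    then have "fmaxpath E s (xs @ ys)" and "hd ys = b" "ys \<noteq> []"
      using fmaxpath_prepend[OF walk] by (auto simp: fmaxpath_def fpath_def)
    then obtain j where "(xs @ ys) ! j = a" "\<forall>k\<le>j. (xs @ ys) ! k \<noteq> b"
      using before unfolding all_before_def by blast
    then show False
      using b_first[of "(!) (xs @ ys)" j] \<open>hd ys = b\<close> \<open>ys \<noteq> []\<close> by (auto simp: nth_append hd_conv_nth)
  next
    fix g assume "imaxpath E b g"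
    then have "imaxpath E s (xs \<frown> g)" and "g 0 = b"
      using imaxpath_prepend[OF walk] by (auto simp: imaxpath_def)
    then obtain j where "(xs \<frown> g) j = a" "\<forall>k\<le>j. (xs \<frown> g) k \<noteq> b"
      using before unfolding all_before_def by blast
    then show False
      using b_first[of "xs \<frown> g" j] \<open>g 0 = b\<close> by auto
  qed
qed

lemma not_reachable_avoiding_all_before:
  assumes "\<not> escapes E s {a}" "a \<noteq> b" and unreachable: "\<not> reachable_avoiding E a s b"
  shows "all_before E s a b"
  unfolding all_before_def
proof (intro conjI allI impI)
  fix xs assume "fmaxpath E s xs"
  then show "\<exists>j<length xs. xs ! j = a \<and> (\<forall>k\<le>j. xs ! k \<noteq> b)"
    using not_reachable_avoiding_occurs_before[OF _ _ _ unreachable assms(2)] assms(1)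
    unfolding fmaxpath_def escapes_def by blast
next
  fix g assume g: "imaxpath E s g"
  then obtain n where "g n = a"
    using assms(1) unfolding escapes_def by blast
  then obtain j where "j \<le> n" "(prefix n g @ [g n]) ! j = a" "\<forall>k\<le>j. (prefix n g @ [g n]) ! k \<noteq> b"
    using not_reachable_avoiding_occurs_before[OF _ _ _ unreachable assms(2), of "prefix n g @ [g n]"]
      imaxpath_prefix[OF g, of n]
    unfolding walk_def by (auto simp: less_Suc_eq_le)
  then show "\<exists>j. g j = a \<and> (\<forall>k\<le>j. g k \<noteq> b)"
    by (auto simp: nth_prefix_snoc)
qed

lemma all_before_iff_not_reachable_avoiding:
  assumes "\<not> escapes E s {a}" "a \<noteq> b"
  shows "all_before E s a b \<longleftrightarrow> \<not> reachable_avoiding E a s b"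
  using all_before_not_reachable_avoiding[of E s a b] not_reachable_avoiding_all_before[OF assms]
  by blast

section \<open>The sets V_p, A_p and V_i\<close>

lemma Vp_iff: "y \<in> Vp V E p \<longleftrightarrow> y \<in> V \<and> \<not> escapes E p {y}"
  unfolding Vp_def escapes_def by blast

lemma interval_iff:
  "interval E W x y xs \<longleftrightarrow>
     x \<in> W \<and> y \<in> W \<and> fpath E xs \<and> (\<exists>zs. xs = x # zs @ [y] \<and> set zs \<inter> W = {})"
proof
  assume int: "interval E W x y xs"
  then obtain t where "xs = x # t" "t \<noteq> []" "last t = y"
    unfolding interval_def by (cases xs) (auto simp: Suc_le_length_iff)
  then obtain zs where xs: "xs = x # zs @ [y]"
    by (metis append_butlast_last_id)
  have "set zs \<inter> W = {}"
  proof -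
    have "zs ! i \<notin> W" if "i < length zs" for i
      using int that unfolding interval_def xs by (auto dest!: spec[of _ "Suc i"] simp: nth_append)
    then show ?thesis
      by (auto simp: in_set_conv_nth)
  qed
  then show "x \<in> W \<and> y \<in> W \<and> fpath E xs \<and> (\<exists>zs. xs = x # zs @ [y] \<and> set zs \<inter> W = {})"
    using int xs unfolding interval_def by blast
next
  assume "x \<in> W \<and> y \<in> W \<and> fpath E xs \<and> (\<exists>zs. xs = x # zs @ [y] \<and> set zs \<inter> W = {})"
  then obtain zs where "x \<in> W" "y \<in> W" "fpath E xs" "xs = x # zs @ [y]" "set zs \<inter> W = {}"
    by blast
  moreover have "xs ! j \<in> set zs" if "0 < j" "j < length xs - 1" for j
    using that \<open>xs = x # zs @ [y]\<close> by (cases j) (auto simp: nth_append)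
  ultimately show "interval E W x y xs"
    unfolding interval_def by auto
qed

lemma Ap_iff:
  "(x, y) \<in> Ap V E p \<longleftrightarrow> x \<in> Vp V E p \<and> y \<in> Vp V E p
     \<and> (\<exists>zs. walk E x (x # zs @ [y]) y \<and> set zs \<inter> Vp V E p = {})"
proof -
  have "(\<exists>xs. interval E W x y xs) \<longleftrightarrow> x \<in> W \<and> y \<in> W \<and> (\<exists>zs. walk E x (x # zs @ [y]) y \<and> set zs \<inter> W = {})"
    for W
    unfolding interval_iff walk_def by auto
  then show ?thesis
    unfolding Ap_def by blast
qed

lemma Vsucc_iff:
  "h \<in> Vsucc V E p s \<longleftrightarrow> h \<in> Vp V E p \<and> (\<exists>zs. walk E s (zs @ [h]) h \<and> set zs \<inter> Vp V E p = {})"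
proof -
  have in_butlast: "z \<in> set (butlast xs) \<longleftrightarrow> (\<exists>j < length xs - 1. xs ! j = z)" for z and xs :: "'a list"
    by (metis in_set_conv_nth length_butlast nth_butlast)
  have "h \<in> Vsucc V E p s \<longleftrightarrow>
      h \<in> Vp V E p \<and> (\<exists>xs. walk E s xs h \<and> set (butlast xs) \<inter> Vp V E p = {})"
    unfolding Vsucc_def walk_def by (auto simp: disjoint_iff in_butlast)
  moreover have "walk E s xs h \<Longrightarrow> xs = butlast xs @ [h]" for xs
    by (metis walk_snocE butlast_snoc)
  ultimately show ?thesis
    by (metis butlast_snoc)
qed

lemma Vp_reachable: "y \<in> Vp V E p \<Longrightarrow> \<exists>xs. walk E p (xs @ [y]) y"
  using unavoidable_reachable[of E p "{y}"] by (auto simp: Vp_iff)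

lemma closed_walk_visits_Vp:
  "walk E p (p # xs) p \<Longrightarrow> xs \<noteq> [] \<Longrightarrow> y \<in> Vp V E p \<Longrightarrow> y \<in> set xs"
  using escapes_cycle[of E p xs "{y}"] by (auto simp: Vp_iff)

lemma Vp_unavoidable_after_walk:
  "y \<in> Vp V E p \<Longrightarrow> walk E p (xs @ [w]) w \<Longrightarrow> y \<notin> set xs \<Longrightarrow> \<not> escapes E w {y}"
  using escapes_prepend[of E p xs w "{y}"] by (auto simp: Vp_iff)

lemma succ_p_unavoidable: "(p, s) \<in> E \<Longrightarrow> y \<in> Vp V E p - {p} \<Longrightarrow> \<not> escapes E s {y}"
  using Vp_unavoidable_after_walk[of y V E p "[p]" s] by (simp add: walk_def)

lemma Ap_succ_p_unavoidable: "(p, w) \<in> Ap V E p \<Longrightarrow> y \<in> Vp V E p - {p} \<Longrightarrow> \<not> escapes E w {y}"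
  using Vp_unavoidable_after_walk[of y V E p "p # _" w] by (fastforce simp: Ap_iff)

lemma Ap_succ_p_neq_p:
  assumes "(p, w) \<in> Ap V E p" "(p, w') \<in> Ap V E p" "w \<noteq> w'"
  shows "w \<noteq> p"
proof
  assume "w = p"
  obtain zs where "walk E p (p # zs @ [p]) p" "set zs \<inter> Vp V E p = {}"
    using assms(1) \<open>w = p\<close> by (auto simp: Ap_iff)
  moreover have "w' \<in> Vp V E p"
    using assms(2) by (simp add: Ap_iff)
  ultimately show False
    using closed_walk_visits_Vp[of E p "zs @ [p]" w' V] assms(3) \<open>w = p\<close> by auto
qed

section \<open>Predicates with two distinct A_p-successors\<close>

locale Ap_branching =
  fixes V :: "'v set" and E :: "('v \<times> 'v) set" and p u v :: 'v
  assumes Ap_p_u: "(p, u) \<in> Ap V E p" and Ap_p_v: "(p, v) \<in> Ap V E p" and u_neq_v: "u \<noteq> v"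
begin

abbreviation C :: "'v set" where
  "C \<equiv> Vp V E p - {p}"

lemma u_in_C: "u \<in> C" and v_in_C: "v \<in> C"
  using Ap_p_u Ap_p_v u_neq_v Ap_succ_p_neq_p[OF Ap_p_u Ap_p_v u_neq_v]
    Ap_succ_p_neq_p[OF Ap_p_v Ap_p_u]
  by (auto simp: Ap_iff)

lemma walk_p_p_trivial:
  assumes "walk E p (xs @ [p]) p"
  shows "xs = []"
proof (rule ccontr)
  assume "xs \<noteq> []"
  then obtain ys where cycle: "walk E p (p # ys @ [p]) p"
    using assms by (cases xs) (auto simp: walk_def)
  have "\<exists>w\<in>set ys. w \<in> {u, v}"
    using closed_walk_visits_Vp[OF cycle] u_in_C by auto
  then obtain ys1 w ys2 where ys: "ys = ys1 @ w # ys2" "w \<in> {u, v}" "\<forall>z\<in>set ys2. z \<notin> {u, v}"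
    by (rule split_list_last_propE)
  obtain w' where w': "w' \<in> {u, v}" "w' \<noteq> w"
    using u_neq_v by blast
  obtain zs where int: "walk E p (p # zs @ [w]) w" "set zs \<inter> Vp V E p = {}"
    using ys(2) Ap_p_u Ap_p_v by (auto simp: Ap_iff)
  have "walk E w (w # ys2 @ [p]) p"
    using walk_split[of E p "p # ys1" w "ys2 @ [p]" p] cycle ys(1) by simp
  then have cycle': "walk E p (p # zs @ w # ys2 @ [p]) p"
    using walk_append[of E p "p # zs" w "ys2 @ [p]" p] int(1) by simp
  have "w' \<in> set (zs @ w # ys2 @ [p])"
    using closed_walk_visits_Vp[OF cycle'] w' u_in_C v_in_C by auto
  then show False
    using w' ys(3) int(2) u_in_C v_in_C by auto
qed

lemma Ap_target_neq_p:
  assumes "(x, y) \<in> Ap V E p"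
  shows "y \<noteq> p"
proof
  assume "y = p"
  obtain zs where int: "walk E x (x # zs @ [y]) y" and "x \<in> Vp V E p"
    using assms by (auto simp: Ap_iff)
  obtain xs where "walk E p (xs @ [x]) x"
    using Vp_reachable[OF \<open>x \<in> Vp V E p\<close>] by blast
  then have "walk E p ((xs @ x # zs) @ [p]) p"
    using walk_append[OF _ int] \<open>y = p\<close> by simp
  then show False
    using walk_p_p_trivial by blast
qed

lemma Vsucc_subset:
  assumes "(p, s) \<in> E"
  shows "Vsucc V E p s \<subseteq> C"
proof
  fix h assume "h \<in> Vsucc V E p s"
  then obtain zs where "h \<in> Vp V E p" "walk E s (zs @ [h]) h"
    by (auto simp: Vsucc_iff)
  then have "walk E p ((p # zs) @ [h]) h"
    using assms by (cases zs) (auto simp: walk_def)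
  then show "h \<in> C"
    using walk_p_p_trivial \<open>h \<in> Vp V E p\<close> by blast
qed

lemma C_unavoidable_branches:
  assumes "x \<in> C"
  shows "\<not> escapes E x {u, v}"
proof
  assume esc: "escapes E x {u, v}"
  obtain xs where walk: "walk E u (xs @ [x]) x"
    using unavoidable_reachable[OF Ap_succ_p_unavoidable[OF Ap_p_u assms]] by blast
  have "x \<notin> {u, v}"
    using escapes_start[OF esc] .
  then have "\<exists>w\<in>set xs. w \<in> {u, v}"
    using walk by (cases xs) (auto simp: walk_def)
  then obtain ys w zs where xs: "xs = ys @ w # zs" "w \<in> {u, v}" "\<forall>z\<in>set zs. z \<notin> {u, v}"
    by (rule split_list_last_propE)
  obtain w' where w': "w' \<in> {u, v}" "w' \<noteq> w"
    using u_neq_v by blast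
  have "walk E w ((w # zs) @ [x]) x"
    using walk_split[of E u ys w "zs @ [x]" x] walk xs(1) by simp
  moreover have "escapes E x {w'}"
    using escapes_mono[OF esc] w'(1) by blast
  ultimately have "escapes E w {w'}"
    using escapes_prepend[of E w "w # zs" x "{w'}"] xs(3) w' by auto
  moreover have "(p, w) \<in> Ap V E p" "w' \<in> C"
    using xs(2) w'(1) Ap_p_u Ap_p_v u_in_C v_in_C by auto
  ultimately show False
    using Ap_succ_p_unavoidable[of p w V E w'] by blast
qed

lemma C_unavoidable:
  assumes "x \<in> C" "y \<in> C"
  shows "\<not> escapes E x {y}"
proof
  assume "escapes E x {y}"
  then obtain w where "w \<in> {u, v}" "escapes E w {y}"
    using escapes_split[OF _ C_unavoidable_branches[OF assms(1)]] by blast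
  then show False
    using Ap_succ_p_unavoidable[OF _ assms(2)] Ap_p_u Ap_p_v by blast
qed

lemma C_connected: "x \<in> C \<Longrightarrow> y \<in> C \<Longrightarrow> \<exists>xs. walk E x (xs @ [y]) y"
  using unavoidable_reachable[OF C_unavoidable] by blast

lemma other_in_C: "x \<in> C \<Longrightarrow> \<exists>y\<in>C. y \<noteq> x"
  using u_in_C v_in_C u_neq_v by metis

lemma Ap_succ_exists:
  assumes "x \<in> C"
  shows "\<exists>y. (x, y) \<in> Ap V E p"
proof -
  obtain y where "y \<in> C" "y \<noteq> x"
    using other_in_C[OF assms] by blast
  then obtain xs where walk: "walk E x (xs @ [y]) y"
    using C_connected[OF assms] by blast
  then obtain ys where xs: "xs @ [y] = x # ys @ [y]"
    using \<open>y \<noteq> x\<close> by (cases xs) (auto simp: walk_def)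
  then have "\<exists>z\<in>set (ys @ [y]). z \<in> Vp V E p"
    using \<open>y \<in> C\<close> by auto
  then obtain zs z zs' where split: "ys @ [y] = zs @ z # zs'" "z \<in> Vp V E p" "\<forall>w\<in>set zs. w \<notin> Vp V E p"
    by (rule split_list_first_propE)
  then have "walk E x (x # zs @ [z]) z"
    using walk_split[of E x "x # zs" z zs' y] walk xs by simp
  then have "(x, z) \<in> Ap V E p"
    using assms split(2,3) by (auto simp: Ap_iff)
  then show ?thesis
    by blast
qed

lemma Ap_irrefl:
  assumes "x \<in> C"
  shows "(x, x) \<notin> Ap V E p"
proof
  assume "(x, x) \<in> Ap V E p"
  then obtain zs where "walk E x (x # zs @ [x]) x" "set zs \<inter> Vp V E p = {}"
    by (auto simp: Ap_iff)
  moreover obtain y where "y \<in> C" "y \<noteq> x"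
    using other_in_C[OF assms] by blast
  ultimately have "escapes E x {y}"
    using escapes_cycle[of E x "zs @ [x]" "{y}"] by auto
  then show False
    using C_unavoidable[OF assms \<open>y \<in> C\<close>] by contradiction
qed

lemma return_walk_visits_C:
  assumes "x \<in> C" "(x, y) \<in> Ap V E p" "walk E y ys x" "z \<in> C" "z \<noteq> x" "z \<noteq> y"
  shows "z \<in> set ys"
proof (rule ccontr)
  assume "z \<notin> set ys"
  obtain zs where int: "walk E x (x # zs @ [y]) y" "set zs \<inter> Vp V E p = {}"
    using assms(2) by (auto simp: Ap_iff)
  obtain ys' where ys: "ys = y # ys'"
    using assms(3) by (rule walk_ConsE)
  have "walk E x (x # zs @ y # ys') x"
    using walk_append[of E x "x # zs" y ys' x] int(1) assms(3) ys by simp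
  then have "escapes E x {z}"
    using escapes_cycle[of E x "zs @ y # ys'" "{z}"] int(2) assms(4,6) \<open>z \<notin> set ys\<close> ys by auto
  then show False
    using C_unavoidable[OF assms(1,4)] by contradiction
qed

lemma Ap_functional:
  assumes "x \<in> C" "(x, y) \<in> Ap V E p" "(x, y') \<in> Ap V E p"
  shows "y = y'"
proof (rule ccontr)
  assume "y \<noteq> y'"
  have succ: "w \<in> C" "w \<noteq> x" if "(x, w) \<in> Ap V E p" for w
    using that Ap_target_neq_p Ap_irrefl[OF assms(1)] by (auto simp: Ap_iff)
  obtain ys where walk: "walk E y (ys @ [x]) x"
    using C_connected[OF succ(1)[OF assms(2)] assms(1)] by blast
  then have "\<exists>w\<in>set (ys @ [x]). w \<in> {y, y'}"
    by (cases ys) (auto simp: walk_def)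
  then obtain zs w zs' where split: "ys @ [x] = zs @ w # zs'" "w \<in> {y, y'}" "\<forall>z\<in>set zs'. z \<notin> {y, y'}"
    by (rule split_list_last_propE)
  obtain w' where w': "w' \<in> {y, y'}" "w' \<noteq> w"
    using split(2) \<open>y \<noteq> y'\<close> by blast
  have "walk E w (w # zs') x"
    using walk_split[of E y zs w zs' x] walk split(1) by simp
  moreover have "(x, w) \<in> Ap V E p" "(x, w') \<in> Ap V E p"
    using split(2) w'(1) assms(2,3) by auto
  ultimately have "w' \<in> set (w # zs')"
    using return_walk_visits_C[OF assms(1)] succ w'(2) by blast
  then show False
    using split(3) w' by auto
qed

lemma Ap_injective:
  assumes "x \<in> C" "x' \<in> C" "(x, y) \<in> Ap V E p" "(x', y) \<in> Ap V E p"
  shows "x = x'"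
proof (rule ccontr)
  assume "x \<noteq> x'"
  have y: "y \<in> C" "y \<noteq> x" "y \<noteq> x'"
    using assms Ap_target_neq_p Ap_irrefl by (auto simp: Ap_iff)
  obtain ys where walk: "walk E y (ys @ [x]) x"
    using C_connected[OF y(1) assms(1)] by blast
  have "\<exists>w\<in>set (ys @ [x]). w \<in> {x, x'}"
    by simp
  then obtain zs w zs' where split: "ys @ [x] = zs @ w # zs'" "w \<in> {x, x'}" "\<forall>z\<in>set zs. z \<notin> {x, x'}"
    by (rule split_list_first_propE)
  obtain w' where w': "w' \<in> {x, x'}" "w' \<noteq> w"
    using split(2) \<open>x \<noteq> x'\<close> by blast
  have walk_w: "walk E y (zs @ [w]) w"
    using walk_split[of E y zs w zs' x] walk split(1) by simp
  have "w \<in> C" "(w, y) \<in> Ap V E p" "w' \<in> C" "w' \<noteq> y"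
    using split(2) w'(1) assms y by auto
  then have "w' \<in> set (zs @ [w])"
    using return_walk_visits_C[OF _ _ walk_w] w'(2) by blast
  then show False
    using split(3) w' by auto
qed

definition ap_next :: "'v \<Rightarrow> 'v" where
  "ap_next x = (THE y. (x, y) \<in> Ap V E p)"

lemma Ap_iff_ap_next: "x \<in> C \<Longrightarrow> (x, y) \<in> Ap V E p \<longleftrightarrow> y = ap_next x"
  unfolding ap_next_def using Ap_succ_exists Ap_functional by (metis theI)

lemma ap_next_in_C:
  assumes "x \<in> C"
  shows "ap_next x \<in> C"
proof -
  have "(x, ap_next x) \<in> Ap V E p"
    using Ap_iff_ap_next[OF assms] by simp
  then show ?thesis
    using Ap_target_neq_p by (auto simp: Ap_iff)
qed

lemma ap_next_maps_C: "ap_next ` C \<subseteq> C"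
  using ap_next_in_C by (simp add: image_subset_iff)

lemma inj_on_ap_next: "inj_on ap_next C"
proof (rule inj_onI)
  fix x y assume "x \<in> C" "y \<in> C" "ap_next x = ap_next y"
  then show "x = y"
    using Ap_injective[of x y "ap_next x"] Ap_iff_ap_next by simp
qed

lemma succs_Ap: "x \<in> C \<Longrightarrow> succs (Ap V E p) x = {ap_next x}"
  unfolding succs_def using Ap_iff_ap_next by simp

lemma walk_follows_orbit:
  assumes "x \<in> C" "walk E x xs y" "y \<in> Vp V E p"
  shows "\<exists>n. y = (ap_next ^^ n) x \<and> (\<forall>k\<le>n. (ap_next ^^ k) x \<in> set xs)"
  using assms(2,3)
proof (induction "length xs" arbitrary: xs y rule: less_induct)
  case less
  obtain ys where xs: "xs = ys @ [y]"
    using less.prems(1) by (rule walk_snocE)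
  show ?case
  proof (cases ys)
    case Nil
    then show ?thesis
      using less.prems(1) xs by (intro exI[of _ 0]) (auto simp: walk_def)
  next
    case (Cons x' ys')
    then have ys: "ys = x # ys'"
      using less.prems(1) xs by (simp add: walk_def)
    show ?thesis
    proof (cases "\<exists>z\<in>set ys'. z \<in> Vp V E p")
      case False
      then have "(x, y) \<in> Ap V E p"
        using less.prems xs ys assms(1) by (auto simp: Ap_iff)
      then show ?thesis
        using assms(1) xs ys Ap_iff_ap_next by (intro exI[of _ 1]) (auto simp: le_Suc_eq)
    next
      case True
      then obtain zs z zs' where split: "ys' = zs @ z # zs'" "z \<in> Vp V E p" "\<forall>w\<in>set zs'. w \<notin> Vp V E p"
        by (rule split_list_last_propE)
      then have walks: "walk E x (x # zs @ [z]) z" "walk E z (z # zs' @ [y]) y"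
        using walk_split[of E x "x # zs" z "zs' @ [y]" y] less.prems(1) xs ys by simp_all
      then obtain n where n: "z = (ap_next ^^ n) x" "\<forall>k\<le>n. (ap_next ^^ k) x \<in> set (x # zs @ [z])"
        using less.hyps[of "x # zs @ [z]" z] split(1,2) xs ys by auto
      have "z \<in> C"
        using n(1) funpow_in[OF ap_next_maps_C assms(1)] by simp
      moreover have "(z, y) \<in> Ap V E p"
        using walks(2) split(2,3) less.prems(2) unfolding Ap_iff by blast
      ultimately have "y = ap_next z"
        using Ap_iff_ap_next by blast
      then have "y = (ap_next ^^ Suc n) x"
        using n(1) by simp
      moreover have "\<forall>k\<le>Suc n. (ap_next ^^ k) x \<in> set xs"
        using n(2) \<open>y = (ap_next ^^ Suc n) x\<close> xs ys split(1) by (auto simp: le_Suc_eq)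
      ultimately show ?thesis
        by blast
    qed
  qed
qed

lemma orbit_reachable_avoiding:
  assumes "x \<in> C" "a \<in> Vp V E p" "\<forall>k\<le>n. (ap_next ^^ k) x \<noteq> a"
  shows "reachable_avoiding E a x ((ap_next ^^ n) x)"
  using assms(3)
proof (induction n)
  case 0
  then show ?case
    unfolding reachable_avoiding_def by (intro exI[of _ "[x]"]) simp
next
  case (Suc n)
  let ?y = "(ap_next ^^ n) x" and ?z = "(ap_next ^^ Suc n) x"
  obtain xs where "walk E x xs ?y" "a \<notin> set xs"
    using Suc unfolding reachable_avoiding_def by auto
  moreover obtain ys where ys: "xs = ys @ [?y]"
    using calculation(1) by (rule walk_snocE)
  moreover have "?y \<in> C"
    using funpow_in[OF ap_next_maps_C assms(1)] .
  then obtain zs where "walk E ?y (?y # zs @ [?z]) ?z" "set zs \<inter> Vp V E p = {}"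
    using Ap_iff_ap_next[of ?y ?z] by (auto simp: Ap_iff)
  ultimately have "walk E x (ys @ ?y # zs @ [?z]) ?z" "a \<notin> set (ys @ ?y # zs @ [?z])"
    using walk_append[of E x ys ?y "zs @ [?z]" ?z] assms(2) Suc.prems by auto
  then show ?case
    unfolding reachable_avoiding_def by blast
qed

lemma ap_next_periodic:
  assumes "x \<in> C"
  shows "\<exists>N>0. (ap_next ^^ N) x = x"
proof -
  obtain xs where "walk E (ap_next x) (xs @ [x]) x"
    using C_connected[OF ap_next_in_C[OF assms] assms] by blast
  then obtain n where "x = (ap_next ^^ n) (ap_next x)"
    using walk_follows_orbit[OF ap_next_in_C[OF assms]] assms by blast
  then show ?thesis
    by (metis funpow_Suc_right o_apply zero_less_Suc)
qed

lemma walk_from_succ_follows_orbit: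
  assumes "(p, s) \<in> E" "walk E s xs y" "y \<in> Vp V E p"
  shows "\<exists>h\<in>Vsucc V E p s. \<exists>n. y = (ap_next ^^ n) h \<and> (\<forall>k\<le>n. (ap_next ^^ k) h \<in> set xs)"
proof -
  have "\<exists>z\<in>set xs. z \<in> Vp V E p"
    using assms(2,3) by (metis walk_snocE in_set_conv_decomp)
  then obtain ys h zs where split: "xs = ys @ h # zs" "h \<in> Vp V E p" "\<forall>z\<in>set ys. z \<notin> Vp V E p"
    by (rule split_list_first_propE)
  then have "walk E s (ys @ [h]) h" "walk E h (h # zs) y"
    using walk_split[of E s ys h zs y] assms(2) by simp_all
  then have "h \<in> Vsucc V E p s"
    using split(2,3) by (auto simp: Vsucc_iff)
  moreover have "h \<in> C"
    using Vsucc_subset[OF assms(1)] calculation by blast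
  ultimately show ?thesis
    using walk_follows_orbit[OF _ \<open>walk E h (h # zs) y\<close> assms(3)] split(1) by fastforce
qed

lemma reachable_avoiding_iff_orbit:
  assumes "(p, s) \<in> E" "a \<in> Vp V E p" "b \<in> Vp V E p"
  shows "reachable_avoiding E a s b \<longleftrightarrow>
    (\<exists>h\<in>Vsucc V E p s. \<exists>n. (ap_next ^^ n) h = b \<and> (\<forall>k\<le>n. (ap_next ^^ k) h \<noteq> a))"
proof
  assume "reachable_avoiding E a s b"
  then obtain xs where "walk E s xs b" "a \<notin> set xs"
    unfolding reachable_avoiding_def by blast
  then show "\<exists>h\<in>Vsucc V E p s. \<exists>n. (ap_next ^^ n) h = b \<and> (\<forall>k\<le>n. (ap_next ^^ k) h \<noteq> a)"
    using walk_from_succ_follows_orbit[OF assms(1) _ assms(3)] by metis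
next
  assume "\<exists>h\<in>Vsucc V E p s. \<exists>n. (ap_next ^^ n) h = b \<and> (\<forall>k\<le>n. (ap_next ^^ k) h \<noteq> a)"
  then obtain h n where h: "h \<in> Vsucc V E p s" "(ap_next ^^ n) h = b" "\<forall>k\<le>n. (ap_next ^^ k) h \<noteq> a"
    by blast
  then obtain zs where zs: "walk E s (zs @ [h]) h" "set zs \<inter> Vp V E p = {}"
    by (auto simp: Vsucc_iff)
  obtain ys where ys: "walk E h ys b" "a \<notin> set ys"
    using orbit_reachable_avoiding[OF _ assms(2) h(3)] Vsucc_subset[OF assms(1)] h(1,2)
    unfolding reachable_avoiding_def by blast
  then obtain ys' where "ys = h # ys'"
    by (meson walk_ConsE)
  then have "walk E s (zs @ h # ys') b" "a \<notin> set (zs @ h # ys')"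
    using walk_append[of E s zs h ys' b] zs ys assms(2) by auto
  then show "reachable_avoiding E a s b"
    unfolding reachable_avoiding_def by blast
qed

lemma strip_nth:
  assumes "(p, s) \<in> E" "strip V E p s xs" "k < length xs"
  shows "xs ! k = (ap_next ^^ k) (hd xs)"
  using assms(3)
proof (induction k)
  case 0
  then show ?case
    by (simp add: hd_conv_nth)
next
  case (Suc k)
  have "hd xs \<in> C"
    using assms(2) Vsucc_subset[OF assms(1)] unfolding strip_def by blast
  moreover have "(xs ! k, xs ! Suc k) \<in> Ap V E p"
    using assms(2) Suc.prems unfolding strip_def fpath_def by blast
  ultimately show ?case
    using Suc Ap_iff_ap_next funpow_in[OF ap_next_maps_C] by simp
qed

lemma strip_first_return:
  assumes "(p, s) \<in> E" "strip V E p s xs"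
  shows "first_return ap_next (Vsucc V E p s) (hd xs) (length xs)"
proof -
  let ?S = "Vsucc V E p s" and ?m = "length xs"
  have "hd xs \<in> ?S" "0 < ?m"
    using assms(2) unfolding strip_def fpath_def by auto
  then have last: "last xs = (ap_next ^^ (?m - 1)) (hd xs)" "(ap_next ^^ (?m - 1)) (hd xs) \<in> C"
    using strip_nth[OF assms] funpow_in[OF ap_next_maps_C] Vsucc_subset[OF assms(1)]
    by (auto simp: last_conv_nth)
  have "(ap_next ^^ ?m) (hd xs) = ap_next ((ap_next ^^ (?m - 1)) (hd xs))"
    using \<open>0 < ?m\<close> by (cases ?m) simp_all
  then have "succs (Ap V E p) (last xs) = {(ap_next ^^ ?m) (hd xs)}"
    using succs_Ap last by simp
  then have "(ap_next ^^ ?m) (hd xs) \<in> ?S"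
    using assms(2) unfolding strip_def by simp
  moreover have "(ap_next ^^ k) (hd xs) \<notin> ?S" if "0 < k" "k < ?m" for k
    using assms(2) that strip_nth[OF assms, of k] unfolding strip_def by auto
  ultimately show ?thesis
    using \<open>hd xs \<in> ?S\<close> \<open>0 < ?m\<close> unfolding first_return_def by simp
qed

lemma first_return_strip:
  assumes "(p, s) \<in> E" "first_return ap_next (Vsucc V E p s) h m"
  shows "strip V E p s (map (\<lambda>k. (ap_next ^^ k) h) [0..<m])" (is "strip V E p s ?xs")
proof -
  have "h \<in> C" "0 < m"
    using assms Vsucc_subset unfolding first_return_def by auto
  then have orbit: "(ap_next ^^ k) h \<in> C" for k
    using funpow_in[OF ap_next_maps_C] by blast
  have "fpath (Ap V E p) ?xs"
    using \<open>0 < m\<close> orbit Ap_iff_ap_next by (auto simp: fpath_def)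
  moreover have "succs (Ap V E p) (last ?xs) = {(ap_next ^^ m) h}"
  proof -
    have "last ?xs = (ap_next ^^ (m - 1)) h"
      using \<open>0 < m\<close> by (simp add: last_map)
    moreover have "(ap_next ^^ m) h = ap_next ((ap_next ^^ (m - 1)) h)"
      using \<open>0 < m\<close> by (cases m) simp_all
    ultimately show ?thesis
      using succs_Ap orbit by simp
  qed
  ultimately show ?thesis
    using assms(2) orbit \<open>0 < m\<close> unfolding strip_def first_return_def by (auto simp: hd_map)
qed

lemma strip_segment_iff_first_return_segment:
  assumes "(p, s) \<in> E"
  shows "(\<exists>xs j k. strip V E p s xs \<and> j < k \<and> k < length xs \<and> xs ! j = a \<and> xs ! k = b) \<longleftrightarrow>
    (\<exists>h m j k. first_return ap_next (Vsucc V E p s) h m \<and> j < k \<and> k < m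
      \<and> (ap_next ^^ j) h = a \<and> (ap_next ^^ k) h = b)"
proof
  assume "\<exists>xs j k. strip V E p s xs \<and> j < k \<and> k < length xs \<and> xs ! j = a \<and> xs ! k = b"
  then obtain xs j k where xs: "strip V E p s xs" "j < k" "k < length xs" "xs ! j = a" "xs ! k = b"
    by blast
  then have "first_return ap_next (Vsucc V E p s) (hd xs) (length xs)"
    "(ap_next ^^ j) (hd xs) = a" "(ap_next ^^ k) (hd xs) = b"
    using strip_first_return[OF assms] strip_nth[OF assms, of xs] by auto
  then show "\<exists>h m j k. first_return ap_next (Vsucc V E p s) h m \<and> j < k \<and> k < m
      \<and> (ap_next ^^ j) h = a \<and> (ap_next ^^ k) h = b"
    using xs(2,3) by blast
next
  assume "\<exists>h m j k. first_return ap_next (Vsucc V E p s) h m \<and> j < k \<and> k < m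
      \<and> (ap_next ^^ j) h = a \<and> (ap_next ^^ k) h = b"
  then obtain h m j k where "first_return ap_next (Vsucc V E p s) h m" "j < k" "k < m"
      "(ap_next ^^ j) h = a" "(ap_next ^^ k) h = b"
    by blast
  then show "\<exists>xs j k. strip V E p s xs \<and> j < k \<and> k < length xs \<and> xs ! j = a \<and> xs ! k = b"
    using first_return_strip[OF assms]
    by (intro exI[of _ "map (\<lambda>k. (ap_next ^^ k) h) [0..<m]"] exI[of _ j] exI[of _ k]) auto
qed

lemma Vsucc_reaches:
  assumes "(p, s) \<in> E" "b \<in> C"
  shows "\<exists>h\<in>Vsucc V E p s. \<exists>n. (ap_next ^^ n) h = b"
proof -
  obtain xs where "walk E s (xs @ [b]) b"
    using unavoidable_reachable[OF succ_p_unavoidable[OF assms]] by blast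
  then show ?thesis
    using walk_from_succ_follows_orbit[OF assms(1)] assms(2) by (metis DiffD1)
qed

end

theorem lemma4p12:
  fixes V :: "'v set" and E :: "('v \<times> 'v) set" and p :: 'v
    and s :: "nat \<Rightarrow> 'v" and i :: nat and a b :: 'v
  assumes "cfg V E"
    and "p \<in> V"
    and "s 1 \<noteq> s 2"
    and "succs E p = {s 1, s 2}"
    and "card (succs (Ap V E p) p) \<ge> 2"
    and "i \<in> {1, 2}"
    and "a \<in> Vp V E p - {p}" and "b \<in> Vp V E p - {p}" and "a \<noteq> b"
  shows "all_before E (s i) a b \<longleftrightarrow>
         (\<exists>xs j k. strip V E p (s i) xs \<and> j < k \<and> k < length xs \<and> xs ! j = a \<and> xs ! k = b)"
proof -
  obtain u v where "(p, u) \<in> Ap V E p" "(p, v) \<in> Ap V E p" "u \<noteq> v"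
    using assms(5) card_le_Suc0_iff_eq[of "succs (Ap V E p) p"] card_ge_0_finite[of "succs (Ap V E p) p"]
    unfolding succs_def by fastforce
  then interpret Ap_branching V E p u v
    by unfold_locales
  let ?S = "Vsucc V E p (s i)"
  have ps: "(p, s i) \<in> E"
    using assms(4,6) unfolding succs_def by auto
  have "all_before E (s i) a b \<longleftrightarrow> \<not> reachable_avoiding E a (s i) b"
    using all_before_iff_not_reachable_avoiding[OF succ_p_unavoidable[OF ps assms(7)] assms(9)] .
  also have "\<dots> \<longleftrightarrow> (\<forall>h\<in>?S. \<forall>n. (ap_next ^^ n) h = b \<longrightarrow> (\<exists>k\<le>n. (ap_next ^^ k) h = a))"
    using reachable_avoiding_iff_orbit[OF ps] assms(7,8) by blast
  also have "\<dots> \<longleftrightarrow> (\<exists>h m j k. first_return ap_next ?S h m \<and> j < k \<and> k < m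
      \<and> (ap_next ^^ j) h = a \<and> (ap_next ^^ k) h = b)"
    using unavoidable_iff_first_return_segment[OF inj_on_ap_next ap_next_maps_C Vsucc_subset[OF ps]]
      Vsucc_reaches[OF ps assms(8)] ap_next_periodic Vsucc_subset[OF ps] assms(9) by blast
  also have "\<dots> \<longleftrightarrow> (\<exists>xs j k. strip V E p (s i) xs \<and> j < k \<and> k < length xs \<and> xs ! j = a \<and> xs ! k = b)"
    using strip_segment_iff_first_return_segment[OF ps] by blast
  finally show ?thesis .
qed

end
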